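(* Let $\ell(c)$ be a Banach function space of real sequences with $\ell^1\subset\ell(c)\subset\ell^0$ having the Fatou property, and let $M=(a_{ij})$ be an infinite real matrix whose columns $C_j=(a_{ij})_i$ are nonzero, satisfy $C_j\in\ell(c)$ for all $j$, and $\sup_j\|C_j\|_{\ell(c)}<\infty$ (so that $M$ defines a continuous linear operator $M\colon\ell^1\to\ell(c)$, $Mx=(\sum_ja_{ij}x_j)_i$). Let $p>1$. The following are equivalent: (a) $M$ defines a continuous linear operator $M\colon\ell^p\to\ell(c)$, i.e. for every $x\in\ell^p$ the series $\sum_ja_{ij}x_j$ converge for all $i$, $Mx\in\ell(c)$, and $x\mapsto Mx$ is bounded from $\ell^p$ to $\ell(c)$; (b) $M\colon\ell^1\to\ell(c)$ is $\frac1p$-th power factorable with a continuous extension, i.e. it admits a continuous linear extension $\ell^p\to\ell(c)$; (c) $\ell^p\subset\ell^1(m_M)$; (d) $\ell^1\subset\ell^{1/p}(m_M)\cap\ell^1(m_M)$; (e) there exists $C>0$ such that $\big\|\sum_{j\in F}x_jC_j\big\|_{\ell(c)}\le C\big(\sum_{j\in F}x_j^p\big)^{1/p}$ for all finite $F\subset\mathbb N$ and all $(x_j)_{j\in F}\subset[0,\infty)$.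
   Context: $\ell^0$ is the space of all real sequences. A Banach function space of sequences $\ell(c)\subset\ell^0$ is a vector subspace, solid under the coordinatewise order, complete under a norm monotone for that order. Fatou property: if $(x^k)\subset\ell(c)$, $0\le x^k\uparrow x$ pointwise and $\sup_k\|x^k\|<\infty$, then $x\in\ell(c)$ and $\|x^k\|\uparrow\|x\|$. $\mathcal P_F(\mathbb N)$ is the $\delta$-ring of finite subsets of $\mathbb N$; $m_M\colon\mathcal P_F(\mathbb N)\to\ell(c)$, $m_M(A)=M\chi_A=\sum_{j\in A}C_j$, is a vector measure whose only null set is $\emptyset$. For $x^*\in\ell(c)^*$, $|x^*m_M|$ is the variation of $x^*\circ m_M$ on $\mathcal P(\mathbb N)$. $\ell^1(m_M)$ is the set of $x\in\ell^0$ with $x\in L^1(|x^*m_M|)$ for every $x^*\in\ell(c)^*$ and such that for each $A\subset\mathbb N$ there is $\int_Ax\,dm_M\in\ell(c)$ with $x^*(\int_Ax\,dm_M)=\int_Ax\,dx^*m_M$ for all $x^*$. For $r\in(0,\infty)$, $\ell^r(m_M)=\{x\in\ell^0:|x|^r\in\ell^1(m_M)\}$. *)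

theory Defs
  imports "HOL-Analysis.Analysis"
begin

type_synonym seq = "nat \<Rightarrow> real"

definition bfs :: "seq set \<Rightarrow> (seq \<Rightarrow> real) \<Rightarrow> bool" where
  "bfs L N \<longleftrightarrow>
     (\<lambda>i. 0) \<in> L \<and>
     (\<forall>x\<in>L. \<forall>y\<in>L. (\<lambda>i. x i + y i) \<in> L) \<and>
     (\<forall>c. \<forall>x\<in>L. (\<lambda>i. c * x i) \<in> L) \<and>
     (\<forall>x\<in>L. \<forall>y. (\<forall>i. \<bar>y i\<bar> \<le> \<bar>x i\<bar>) \<longrightarrow> y \<in> L \<and> N y \<le> N x) \<and>
     (\<forall>x\<in>L. 0 \<le> N x \<and> (N x = 0 \<longleftrightarrow> x = (\<lambda>i. 0))) \<and>
     (\<forall>c. \<forall>x\<in>L. N (\<lambda>i. c * x i) = \<bar>c\<bar> * N x) \<and>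
     (\<forall>x\<in>L. \<forall>y\<in>L. N (\<lambda>i. x i + y i) \<le> N x + N y) \<and>
     (\<forall>X. (\<forall>n. X n \<in> L) \<longrightarrow>
          (\<forall>e>0. \<exists>n0. \<forall>m\<ge>n0. \<forall>n\<ge>n0. N (\<lambda>i. X m i - X n i) < e) \<longrightarrow>
          (\<exists>y\<in>L. (\<lambda>n. N (\<lambda>i. X n i - y i)) \<longlonglongrightarrow> 0))"

definition fatou :: "seq set \<Rightarrow> (seq \<Rightarrow> real) \<Rightarrow> bool" where
  "fatou L N \<longleftrightarrow>
     (\<forall>X x. (\<forall>k. X k \<in> L) \<and> (\<forall>k i. 0 \<le> X k i) \<and> (\<forall>k i. X k i \<le> X (Suc k) i) \<and>
            (\<forall>i. (\<lambda>k. X k i) \<longlonglongrightarrow> x i) \<and> (\<exists>B. \<forall>k. N (X k) \<le> B)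
        \<longrightarrow> x \<in> L \<and> mono (\<lambda>k. N (X k)) \<and> (\<lambda>k. N (X k)) \<longlonglongrightarrow> N x)"

definition ell1 :: "seq set" where
  "ell1 = {x. summable (\<lambda>i. \<bar>x i\<bar>)}"

definition ellp :: "real \<Rightarrow> seq set" where
  "ellp p = {x. summable (\<lambda>i. \<bar>x i\<bar> powr p)}"

definition ellp_norm :: "real \<Rightarrow> seq \<Rightarrow> real" where
  "ellp_norm p x = (\<Sum>i. \<bar>x i\<bar> powr p) powr (1 / p)"

definition col :: "(nat \<Rightarrow> nat \<Rightarrow> real) \<Rightarrow> nat \<Rightarrow> seq" where
  "col a j = (\<lambda>i. a i j)"

definition matop :: "(nat \<Rightarrow> nat \<Rightarrow> real) \<Rightarrow> seq \<Rightarrow> seq" where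
  "matop a x = (\<lambda>i. \<Sum>j. a i j * x j)"

definition bfs_dual :: "seq set \<Rightarrow> (seq \<Rightarrow> real) \<Rightarrow> (seq \<Rightarrow> real) set" where
  "bfs_dual L N = {\<phi>. (\<forall>x\<in>L. \<forall>y\<in>L. \<phi> (\<lambda>i. x i + y i) = \<phi> x + \<phi> y) \<and>
                      (\<forall>c. \<forall>x\<in>L. \<phi> (\<lambda>i. c * x i) = c * \<phi> x) \<and>
                      (\<exists>K. \<forall>x\<in>L. \<bar>\<phi> x\<bar> \<le> K * N x)}"

text \<open>Vector measure m_M(A) = sum_{j in A} C_j on finite sets.\<close>
definition mM :: "(nat \<Rightarrow> nat \<Rightarrow> real) \<Rightarrow> nat set \<Rightarrow> seq" where
  "mM a A = (\<lambda>i. \<Sum>j\<in>A. a i j)"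

text \<open>L^1(m_M): x is integrable w.r.t. |x* m_M| for every x* (the variation
  |x* m_M| is the point-mass measure with weights |x*(m_M{j})|), and for every
  A there is an element of L representing the integral over A.\<close>
definition ell1_mM :: "seq set \<Rightarrow> (seq \<Rightarrow> real) \<Rightarrow> (nat \<Rightarrow> nat \<Rightarrow> real) \<Rightarrow> seq set" where
  "ell1_mM L N a = {x.
     (\<forall>\<phi>\<in>bfs_dual L N. summable (\<lambda>j. \<bar>x j\<bar> * \<bar>\<phi> (mM a {j})\<bar>)) \<and>
     (\<forall>A::nat set. \<exists>v\<in>L. \<forall>\<phi>\<in>bfs_dual L N.
         \<phi> v = (\<Sum>j. if j \<in> A then x j * \<phi> (mM a {j}) else 0))}"

definition ellr_mM :: "real \<Rightarrow> seq set \<Rightarrow> (seq \<Rightarrow> real) \<Rightarrow> (nat \<Rightarrow> nat \<Rightarrow> real) \<Rightarrow> seq set" where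
  "ellr_mM r L N a = {x. (\<lambda>j. \<bar>x j\<bar> powr r) \<in> ell1_mM L N a}"

end

theory Submission
  imports Defs
begin

text \<open>Everything reduces to the estimate (E) on finite nonnegative combinations of columns.
  Given (E), for x in lp the partial sums of Mx are Cauchy in l(c), which yields (A) and (B),
  and (C) by continuity of the dual functionals; (C) and (D) say the same after substituting
  |x|^p for x. Conversely (C) implies (E) by a gliding hump argument. If (E) fails, blocks of
  columns far out, with tiny lp-mass but huge norm, glue to a single x in lp. But for x in
  l1(m_M) the Fatou property makes S |-> ||int_S x dm_M|| lower semicontinuous on the Cantor
  space of subsets of \<nat>, so by a Baire argument it is bounded on a cylinder, hence on all
  sets of large indices, contradicting the humps.\<close>

lemma INF_tail_tendsto:
  fixes X :: "nat \<Rightarrow> real"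
  assumes nonneg: "\<And>l. 0 \<le> X l" and lim: "X \<longlonglongrightarrow> c"
  shows "(\<lambda>r. INF l\<in>{r..}. X l) \<longlonglongrightarrow> c"
proof (rule LIMSEQ_I)
  fix e :: real assume "e > 0"
  then obtain r0 where r0: "\<And>l. l \<ge> r0 \<Longrightarrow> \<bar>X l - c\<bar> < e / 2"
    using LIMSEQ_D[OF lim, of "e / 2"] by (metis half_gt_zero real_norm_def)
  have "\<bar>(INF l\<in>{r..}. X l) - c\<bar> < e" if "r \<ge> r0" for r
  proof -
    have "c - e / 2 \<le> (INF l\<in>{r..}. X l)"
    proof (rule cINF_greatest)
      fix l assume "l \<in> {r..}"
      with that have "\<bar>X l - c\<bar> < e / 2"
        by (intro r0) simp
      then show "c - e / 2 \<le> X l"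
        by linarith
    qed simp
    moreover have "(INF l\<in>{r..}. X l) \<le> X r"
      using nonneg by (intro cINF_lower bdd_belowI[of _ 0]) auto
    ultimately show ?thesis
      using r0[OF that] \<open>e > 0\<close> by linarith
  qed
  then show "\<exists>r0. \<forall>r\<ge>r0. norm ((INF l\<in>{r..}. X l) - c) < e"
    by auto
qed

locale seq_bfs =
  fixes L :: "seq set" and N :: "seq \<Rightarrow> real"
  assumes bfs: "bfs L N" and ell1_subset: "ell1 \<subseteq> L"
begin

lemma zero_mem: "(\<lambda>i. 0) \<in> L"
  using bfs unfolding bfs_def by blast

lemma add_mem: "x \<in> L \<Longrightarrow> y \<in> L \<Longrightarrow> (\<lambda>i. x i + y i) \<in> L"
  using bfs unfolding bfs_def by blast

lemma scale_mem: "x \<in> L \<Longrightarrow> (\<lambda>i. c * x i) \<in> L"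
  using bfs unfolding bfs_def by blast

lemma solid: "x \<in> L \<Longrightarrow> (\<And>i. \<bar>y i\<bar> \<le> \<bar>x i\<bar>) \<Longrightarrow> y \<in> L \<and> N y \<le> N x"
  using bfs unfolding bfs_def by blast

lemma norm_nonneg: "x \<in> L \<Longrightarrow> 0 \<le> N x"
  using bfs unfolding bfs_def by blast

lemma norm_eq_zero_iff: "x \<in> L \<Longrightarrow> N x = 0 \<longleftrightarrow> x = (\<lambda>i. 0)"
  using bfs unfolding bfs_def by blast

lemma norm_scale: "x \<in> L \<Longrightarrow> N (\<lambda>i. c * x i) = \<bar>c\<bar> * N x"
  using bfs unfolding bfs_def by blast

lemma norm_triangle: "x \<in> L \<Longrightarrow> y \<in> L \<Longrightarrow> N (\<lambda>i. x i + y i) \<le> N x + N y"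
  using bfs unfolding bfs_def by blast

lemma complete:
  assumes "\<And>n. X n \<in> L"
    and "\<And>e. e > 0 \<Longrightarrow> \<exists>n0. \<forall>m\<ge>n0. \<forall>n\<ge>n0. N (\<lambda>i. X m i - X n i) < e"
  shows "\<exists>y\<in>L. (\<lambda>n. N (\<lambda>i. X n i - y i)) \<longlonglongrightarrow> 0"
  using bfs assms unfolding bfs_def by blast

lemma norm_zero: "N (\<lambda>i. 0) = 0"
  using norm_eq_zero_iff zero_mem by blast

lemma diff_mem: "x \<in> L \<Longrightarrow> y \<in> L \<Longrightarrow> (\<lambda>i. x i - y i) \<in> L"
  using add_mem[OF _ scale_mem, of x y "-1"] by simp

lemma norm_minus_commute: "x \<in> L \<Longrightarrow> y \<in> L \<Longrightarrow> N (\<lambda>i. x i - y i) = N (\<lambda>i. y i - x i)"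
  using norm_scale[OF diff_mem, of x y "-1"] by simp

lemma norm_triangle_diff: "x \<in> L \<Longrightarrow> y \<in> L \<Longrightarrow> N (\<lambda>i. x i - y i) \<le> N x + N y"
  using norm_triangle[OF _ scale_mem, of x y "-1"] norm_scale[of y "-1"] by simp

lemma sum_mem_norm_sum_le:
  assumes "finite F" and "\<And>j. j \<in> F \<Longrightarrow> f j \<in> L"
  shows "(\<lambda>i. \<Sum>j\<in>F. f j i) \<in> L \<and> N (\<lambda>i. \<Sum>j\<in>F. f j i) \<le> (\<Sum>j\<in>F. N (f j))"
  using assms
proof (induction F rule: finite_induct)
  case empty
  then show ?case using zero_mem norm_zero by simp
next
  case (insert k F)
  then have "(\<lambda>i. \<Sum>j\<in>F. f j i) \<in> L" "f k \<in> L" by auto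
  with insert norm_triangle[of "f k" "\<lambda>i. \<Sum>j\<in>F. f j i"] show ?case
    by (simp add: add_mem eta_contract_eq)
qed

lemma coordinate_bounded: "\<exists>c. \<forall>y\<in>L. \<bar>y k\<bar> \<le> c * N y"
proof -
  define e where "e = (\<lambda>i. if i = k then 1 else 0 :: real)"
  have "summable (\<lambda>i. \<bar>e i\<bar>)"
    unfolding e_def by (rule summable_finite[of "{k}"]) auto
  then have e: "e \<in> L"
    using ell1_subset unfolding ell1_def by auto
  have "e \<noteq> (\<lambda>i. 0)"
    unfolding e_def by (metis one_neq_zero)
  then have "N e > 0"
    using norm_eq_zero_iff[OF e] norm_nonneg[OF e] by linarith
  moreover have "\<bar>y k\<bar> * N e \<le> N y" if "y \<in> L" for y
  proof -
    have "N (\<lambda>i. y k * e i) \<le> N y"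
      using solid[OF that, of "\<lambda>i. y k * e i"] by (auto simp: e_def abs_mult)
    then show ?thesis
      using norm_scale[OF e, of "y k"] by simp
  qed
  ultimately show ?thesis
    by (intro exI[of _ "1 / N e"]) (auto simp: field_simps)
qed

lemma dual_add: "\<phi> \<in> bfs_dual L N \<Longrightarrow> x \<in> L \<Longrightarrow> y \<in> L \<Longrightarrow> \<phi> (\<lambda>i. x i + y i) = \<phi> x + \<phi> y"
  unfolding bfs_dual_def by blast

lemma dual_scale: "\<phi> \<in> bfs_dual L N \<Longrightarrow> x \<in> L \<Longrightarrow> \<phi> (\<lambda>i. c * x i) = c * \<phi> x"
  unfolding bfs_dual_def by blast

lemma dual_diff: "\<phi> \<in> bfs_dual L N \<Longrightarrow> x \<in> L \<Longrightarrow> y \<in> L \<Longrightarrow> \<phi> (\<lambda>i. x i - y i) = \<phi> x - \<phi> y"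
  using dual_add[OF _ _ scale_mem, of \<phi> x y "-1"] dual_scale[of \<phi> y "-1"] by simp

lemma dual_sum:
  assumes "\<phi> \<in> bfs_dual L N" and "finite F" and "\<And>j. j \<in> F \<Longrightarrow> f j \<in> L"
  shows "\<phi> (\<lambda>i. \<Sum>j\<in>F. f j i) = (\<Sum>j\<in>F. \<phi> (f j))"
  using assms(2,3)
proof (induction F rule: finite_induct)
  case empty
  then show ?case using dual_scale[OF assms(1) zero_mem, of 0] by simp
next
  case (insert k F)
  then show ?case
    using dual_add[OF assms(1), of "f k" "\<lambda>i. \<Sum>j\<in>F. f j i"] sum_mem_norm_sum_le[of F f]
    by (simp add: eta_contract_eq)
qed

lemma dual_bounded:
  assumes "\<phi> \<in> bfs_dual L N"
  obtains K where "K \<ge> 0" and "\<And>x. x \<in> L \<Longrightarrow> \<bar>\<phi> x\<bar> \<le> K * N x"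
proof -
  obtain K where K: "\<forall>x\<in>L. \<bar>\<phi> x\<bar> \<le> K * N x"
    using assms unfolding bfs_dual_def by blast
  have "\<bar>\<phi> x\<bar> \<le> max K 0 * N x" if x: "x \<in> L" for x
  proof -
    have "K * N x \<le> max K 0 * N x"
      using norm_nonneg[OF x] by (intro mult_right_mono) auto
    then show ?thesis using K x by fastforce
  qed
  then show thesis using that[of "max K 0"] by auto
qed

lemma dual_tendsto:
  assumes \<phi>: "\<phi> \<in> bfs_dual L N" and X: "\<And>n. X n \<in> L" and y: "y \<in> L"
    and lim: "(\<lambda>n. N (\<lambda>i. X n i - y i)) \<longlonglongrightarrow> 0"
  shows "(\<lambda>n. \<phi> (X n)) \<longlonglongrightarrow> \<phi> y"
proof -
  obtain K where K: "\<And>x. x \<in> L \<Longrightarrow> \<bar>\<phi> x\<bar> \<le> K * N x"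
    using dual_bounded[OF \<phi>] by blast
  have "norm (\<phi> (X n) - \<phi> y) \<le> K * N (\<lambda>i. X n i - y i)" for n
    using K[OF diff_mem[OF X y]] dual_diff[OF \<phi> X y] by simp
  then have "(\<lambda>n. \<phi> (X n) - \<phi> y) \<longlonglongrightarrow> 0"
    by (intro Lim_null_comparison[OF always_eventually tendsto_mult_right_zero[OF lim]]) blast
  then show ?thesis
    by (simp add: LIM_zero_iff)
qed

lemma coordinate_in_dual: "(\<lambda>y. y k) \<in> bfs_dual L N"
  using coordinate_bounded[of k] unfolding bfs_dual_def by auto

text \<open>Apply the Fatou property to the increasing lower envelopes inf_{l \<ge> r} |Y l|.\<close>
lemma fatou_lower_semicontinuous:
  assumes fat: "fatou L N" and Y: "\<And>l. Y l \<in> L" and bound: "\<And>l. N (Y l) \<le> k"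
    and lim: "\<And>i. (\<lambda>l. Y l i) \<longlonglongrightarrow> y i"
  shows "y \<in> L \<and> N y \<le> k"
proof -
  define Z where "Z r i = (INF l\<in>{r..}. \<bar>Y l i\<bar>)" for r i
  have bdd: "bdd_below ((\<lambda>l. \<bar>Y l i\<bar>) ` A)" for i A
    by (rule bdd_belowI[of _ 0]) auto
  have Z_nonneg: "0 \<le> Z r i" for r i
    unfolding Z_def by (rule cINF_greatest) auto
  have Z_le: "Z r i \<le> \<bar>Y r i\<bar>" for r i
    unfolding Z_def by (rule cINF_lower[OF bdd]) auto
  have Z_mono: "Z r i \<le> Z (Suc r) i" for r i
    unfolding Z_def by (rule cINF_superset_mono[OF _ bdd]) auto
  have Z_lim: "(\<lambda>r. Z r i) \<longlonglongrightarrow> \<bar>y i\<bar>" for i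
    unfolding Z_def by (intro INF_tail_tendsto tendsto_rabs lim) simp
  have Z_mem: "Z r \<in> L" and Z_norm: "N (Z r) \<le> k" for r
    using solid[OF Y[of r], of "Z r"] Z_nonneg Z_le bound[of r] by (auto intro: order_trans)
  have "(\<lambda>i. \<bar>y i\<bar>) \<in> L \<and> (\<lambda>r. N (Z r)) \<longlonglongrightarrow> N (\<lambda>i. \<bar>y i\<bar>)"
    using fat Z_mem Z_nonneg Z_mono Z_lim Z_norm unfolding fatou_def
    by (elim allE[of _ Z] allE[of _ "\<lambda>i. \<bar>y i\<bar>"]) blast
  then have "(\<lambda>i. \<bar>y i\<bar>) \<in> L" and "N (\<lambda>i. \<bar>y i\<bar>) \<le> k"
    using LIMSEQ_le_const2[of "\<lambda>r. N (Z r)" _ k] Z_norm by auto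
  then show ?thesis
    using solid[of "\<lambda>i. \<bar>y i\<bar>" y] by force
qed

lemma norm_le_if_tendsto:
  assumes X: "\<And>n. X n \<in> L" and y: "y \<in> L" and lim: "(\<lambda>n. N (\<lambda>i. X n i - y i)) \<longlonglongrightarrow> 0"
    and bound: "\<And>n. N (X n) \<le> B"
  shows "N y \<le> B"
proof -
  have "N y - B \<le> N (\<lambda>i. X n i - y i)" for n
  proof -
    have "N y = N (\<lambda>i. (y i - X n i) + X n i)"
      by simp
    also have "\<dots> \<le> N (\<lambda>i. y i - X n i) + N (X n)"
      by (rule norm_triangle[OF diff_mem[OF y X] X])
    finally show ?thesis
      using norm_minus_commute[OF X y, of n] bound[of n] by simp
  qed
  then have "N y - B \<le> 0"
    using LIMSEQ_le_const[OF lim] by blast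
  then show ?thesis by simp
qed

end

lemma ellp_solid:
  assumes x: "x \<in> ellp p" and p: "p > 0" and le: "\<And>j. \<bar>y j\<bar> \<le> \<bar>x j\<bar>"
  shows "y \<in> ellp p" and "ellp_norm p y \<le> ellp_norm p x"
proof -
  have sx: "summable (\<lambda>i. \<bar>x i\<bar> powr p)"
    using x unfolding ellp_def by auto
  have le_p: "\<bar>y i\<bar> powr p \<le> \<bar>x i\<bar> powr p" for i
    using le[of i] p by (intro powr_mono2) auto
  have sy: "summable (\<lambda>i. \<bar>y i\<bar> powr p)"
    by (rule summable_comparison_test[OF _ sx]) (use le_p in auto)
  then show "y \<in> ellp p"
    unfolding ellp_def by auto
  have "(\<Sum>i. \<bar>y i\<bar> powr p) \<le> (\<Sum>i. \<bar>x i\<bar> powr p)"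
    by (rule suminf_le[OF le_p sy sx])
  then show "ellp_norm p y \<le> ellp_norm p x"
    unfolding ellp_norm_def using p by (intro powr_mono2) (auto intro!: suminf_nonneg sy)
qed

lemma finite_sum_le_ellp_norm:
  assumes x: "x \<in> ellp p" and p: "p > 0" and F: "finite F"
  shows "(\<Sum>j\<in>F. \<bar>x j\<bar> powr p) powr (1 / p) \<le> ellp_norm p x"
proof -
  have "(\<Sum>j\<in>F. \<bar>x j\<bar> powr p) \<le> (\<Sum>i. \<bar>x i\<bar> powr p)"
    using x F unfolding ellp_def by (intro sum_le_suminf) auto
  then show ?thesis
    unfolding ellp_norm_def using p by (intro powr_mono2) (auto intro!: sum_nonneg)
qed

lemma ellp_finite_support:
  assumes F: "finite F" and zero: "\<And>j. j \<notin> F \<Longrightarrow> x j = 0" and p: "p > 0"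
  shows "x \<in> ellp p" and "ellp_norm p x = (\<Sum>j\<in>F. \<bar>x j\<bar> powr p) powr (1 / p)"
proof -
  have zero_p: "\<And>j. j \<notin> F \<Longrightarrow> \<bar>x j\<bar> powr p = 0"
    using zero by simp
  show "x \<in> ellp p"
    unfolding ellp_def using summable_finite[OF F zero_p] by simp
  show "ellp_norm p x = (\<Sum>j\<in>F. \<bar>x j\<bar> powr p) powr (1 / p)"
    unfolding ellp_norm_def using suminf_finite[OF F zero_p] by simp
qed

lemma ell1_subset_ellp:
  assumes p: "p \<ge> 1"
  shows "ell1 \<subseteq> ellp p"
proof
  fix x assume "x \<in> ell1"
  then have s: "summable (\<lambda>i. \<bar>x i\<bar>)"
    unfolding ell1_def by auto
  then obtain n0 where n0: "\<And>n. n \<ge> n0 \<Longrightarrow> \<bar>x n\<bar> < 1"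
    using LIMSEQ_D[OF summable_LIMSEQ_zero[OF s], of 1] by auto
  have "norm (\<bar>x n\<bar> powr p) \<le> \<bar>x n\<bar>" if "n \<ge> n0" for n
    using n0[OF that] p by (cases "x n = 0") (auto intro: powr_le_one_le)
  then have "summable (\<lambda>i. \<bar>x i\<bar> powr p)"
    by (intro summable_comparison_test[OF _ s]) blast
  then show "x \<in> ellp p"
    unfolding ellp_def by auto
qed

definition agree_below :: "nat \<Rightarrow> nat set \<Rightarrow> nat set \<Rightarrow> bool" where
  "agree_below m S T \<longleftrightarrow> (\<forall>j<m. j \<in> S \<longleftrightarrow> j \<in> T)"

lemma agree_below_refl: "agree_below m S S"
  unfolding agree_below_def by simp

lemma agree_below_mono: "m \<le> m' \<Longrightarrow> agree_below m' S T \<Longrightarrow> agree_below m S T"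
  unfolding agree_below_def by auto

lemma agree_below_trans:
  "agree_below m S T \<Longrightarrow> agree_below m' T U \<Longrightarrow> m \<le> m' \<Longrightarrow> agree_below m S U"
  unfolding agree_below_def by auto

lemma nested_cylinders_common_point:
  assumes "strict_mono M" and nested: "\<And>n. agree_below (M n) (T n) (T (Suc n))"
  shows "agree_below (M n) (T n) {j. j \<in> T (Suc j)}"
proof -
  have M_ge: "n \<le> M n" for n
    using \<open>strict_mono M\<close> by (rule seq_suble)
  have agree: "agree_below (M n) (T n) (T n')" if "n \<le> n'" for n n'
    using that
  proof (induction n' rule: dec_induct)
    case base
    then show ?case by (rule agree_below_refl)
  next
    case (step k)
    moreover have "M n \<le> M k"
      using step.hyps(1) strict_mono_less_eq[OF \<open>strict_mono M\<close>] by simp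
    ultimately show ?case
      using agree_below_trans[OF step.IH nested[of k]] by blast
  qed
  show ?thesis
    unfolding agree_below_def
  proof (intro allI impI)
    fix j assume j: "j < M n"
    have "j \<in> T (max n (Suc j)) \<longleftrightarrow> j \<in> T n"
      using agree[of n "max n (Suc j)"] j unfolding agree_below_def by auto
    moreover have "j \<in> T (max n (Suc j)) \<longleftrightarrow> j \<in> T (Suc j)"
      using agree[of "Suc j" "max n (Suc j)"] M_ge[of "Suc j"] unfolding agree_below_def by auto
    ultimately show "j \<in> T n \<longleftrightarrow> j \<in> {j. j \<in> T (Suc j)}"
      by auto
  qed
qed

text \<open>A Baire category argument on the Cantor space of subsets of \<nat>: otherwise one finds
  nested cylinders on which f exceeds 0, 1, 2, ..., and f is infinite on their intersection.\<close>
lemma bounded_on_cylinder_if_lower_semicontinuous: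
  fixes f :: "nat set \<Rightarrow> real"
  assumes lsc: "\<And>S k. f S > k \<Longrightarrow> \<exists>m. \<forall>T. agree_below m S T \<longrightarrow> f T > k"
  shows "\<exists>m T k. \<forall>S. agree_below m T S \<longrightarrow> f S \<le> k"
proof (rule ccontr)
  assume "\<not> ?thesis"
  then have unbounded: "\<exists>S. agree_below m T S \<and> f S > k" for m T k
    by (auto simp: not_le)
  have refine: "\<exists>m' T'. m < m' \<and> agree_below m T T' \<and> (\<forall>S. agree_below m' T' S \<longrightarrow> f S > k)"
    for m T k
  proof -
    obtain S where S: "agree_below m T S" "f S > k"
      using unbounded by blast
    obtain m' where "\<forall>T. agree_below m' S T \<longrightarrow> f T > k"
      using lsc[OF S(2)] by blast
    then have "\<forall>U. agree_below (max m' (Suc m)) S U \<longrightarrow> f U > k"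
      using agree_below_mono[OF max.cobounded1] by blast
    with S(1) show ?thesis
      by (intro exI[of _ "max m' (Suc m)"] exI[of _ S]) auto
  qed
  define P where "P n c \<longleftrightarrow> (\<forall>S. agree_below (fst c) (snd c) S \<longrightarrow> f S > real n)" for n c
  obtain c where c: "\<And>n. P n (c n)"
    and nested: "\<And>n. fst (c n) < fst (c (Suc n)) \<and> agree_below (fst (c n)) (snd (c n)) (snd (c (Suc n)))"
    using dependent_nat_choice[of P "\<lambda>n c c'. fst c < fst c' \<and> agree_below (fst c) (snd c) (snd c')"]
      refine unfolding P_def by (metis fst_conv snd_conv)
  have "strict_mono (\<lambda>n. fst (c n))"
    unfolding strict_mono_Suc_iff using nested by blast
  then have "agree_below (fst (c n)) (snd (c n)) {j. j \<in> snd (c (Suc j))}" for n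
    using nested_cylinders_common_point[of "\<lambda>n. fst (c n)" "\<lambda>n. snd (c n)"] nested by blast
  then have "f {j. j \<in> snd (c (Suc j))} > real n" for n
    using c[of n] unfolding P_def by blast
  then show False
    using reals_Archimedean2[of "f {j. j \<in> snd (c (Suc j))}"] by (meson less_asym)
qed

definition colsum :: "(nat \<Rightarrow> nat \<Rightarrow> real) \<Rightarrow> nat set \<Rightarrow> seq \<Rightarrow> seq" where
  "colsum a F x = (\<lambda>i. \<Sum>j\<in>F. x j * a i j)"

definition seq_restrict :: "nat set \<Rightarrow> seq \<Rightarrow> seq" where
  "seq_restrict S x = (\<lambda>j. if j \<in> S then x j else 0)"

lemma mM_singleton: "mM a {j} = col a j"
  unfolding mM_def col_def by simp

lemma matop_finite_support:
  "finite F \<Longrightarrow> (\<And>j. j \<notin> F \<Longrightarrow> x j = 0) \<Longrightarrow> matop a x = colsum a F x"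
  unfolding matop_def colsum_def by (rule ext, subst suminf_finite[of F]) (auto simp: mult.commute)

lemma colsum_cong: "(\<And>j. j \<in> F \<Longrightarrow> x j = y j) \<Longrightarrow> colsum a F x = colsum a F y"
  unfolding colsum_def by simp

lemma colsum_scale: "colsum a F (\<lambda>j. c * x j) = (\<lambda>i. c * colsum a F x i)"
  unfolding colsum_def by (simp add: sum_distrib_left mult.assoc)

lemma colsum_diff: "colsum a F (\<lambda>j. x j - y j) = (\<lambda>i. colsum a F x i - colsum a F y i)"
  unfolding colsum_def by (simp add: sum_subtractf left_diff_distrib)

lemma colsum_union:
  "finite F \<Longrightarrow> finite G \<Longrightarrow> F \<inter> G = {} \<Longrightarrow>
    colsum a (F \<union> G) x = (\<lambda>i. colsum a F x i + colsum a G x i)"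
  unfolding colsum_def by (simp add: sum.union_disjoint)

lemma colsum_split_lessThan:
  "n \<le> m \<Longrightarrow> (\<lambda>i. colsum a {..<m} x i - colsum a {..<n} x i) = colsum a {n..<m} x"
  unfolding colsum_def using sum_diff_nat_ivl[of 0 n m] by (auto simp: atLeast0LessThan)

lemma matop_restrict_finite: "finite F \<Longrightarrow> matop a (seq_restrict F x) = colsum a F x"
  using matop_finite_support[of F "seq_restrict F x" a] colsum_cong[of F "seq_restrict F x" x a]
  by (simp add: seq_restrict_def)

lemma matop_restrict_union:
  assumes row: "\<And>i. summable (\<lambda>j. \<bar>a i j * x j\<bar>)" and disjoint: "S \<inter> T = {}"
  shows "matop a (seq_restrict (S \<union> T) x) = (\<lambda>i. matop a (seq_restrict S x) i + matop a (seq_restrict T x) i)"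
proof
  fix i
  have summable: "summable (\<lambda>j. a i j * seq_restrict U x j)" for U
    by (rule summable_comparison_test[OF _ row[of i]]) (auto simp: seq_restrict_def)
  have "matop a (seq_restrict S x) i + matop a (seq_restrict T x) i
      = (\<Sum>j. a i j * seq_restrict S x j + a i j * seq_restrict T x j)"
    unfolding matop_def by (rule suminf_add[OF summable summable])
  also have "\<dots> = matop a (seq_restrict (S \<union> T) x) i"
    unfolding matop_def seq_restrict_def using disjoint by (intro arg_cong[where f = suminf] ext) auto
  finally show "matop a (seq_restrict (S \<union> T) x) i = matop a (seq_restrict S x) i + matop a (seq_restrict T x) i"
    by simp
qed

lemma matop_restrict_tendsto:
  assumes row: "summable (\<lambda>j. \<bar>a i j * x j\<bar>)" and agree: "\<And>l. agree_below l S (S' l)"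
  shows "(\<lambda>l. matop a (seq_restrict (S' l) x) i) \<longlonglongrightarrow> matop a (seq_restrict S x) i"
proof -
  have "(\<lambda>l. a i j * seq_restrict (S' l) x j) \<longlonglongrightarrow> a i j * seq_restrict S x j" for j
  proof (rule tendsto_eventually)
    have "\<forall>l\<ge>Suc j. j \<in> S' l \<longleftrightarrow> j \<in> S"
      using agree unfolding agree_below_def by (auto simp: Suc_le_eq)
    then show "\<forall>\<^sub>F l in sequentially. a i j * seq_restrict (S' l) x j = a i j * seq_restrict S x j"
      unfolding eventually_sequentially seq_restrict_def by auto
  qed
  moreover have "\<forall>\<^sub>F (j, l) in at_top \<times>\<^sub>F sequentially. norm (a i j * seq_restrict (S' l) x j) \<le> \<bar>a i j * x j\<bar>"
    by (intro always_eventually) (auto simp: seq_restrict_def)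
  ultimately show ?thesis
    unfolding matop_def
    using tannerys_theorem[where a = "\<lambda>j l. a i j * seq_restrict (S' l) x j"
        and b = "\<lambda>j. a i j * seq_restrict S x j" and F = sequentially, OF _ _ row]
    by simp
qed

lemma consecutive_blocks:
  fixes Q :: "nat \<Rightarrow> nat set \<Rightarrow> seq \<Rightarrow> bool"
  assumes blocks: "\<And>m n. \<exists>F y. finite F \<and> F \<subseteq> {m..} \<and> Q n F y"
  obtains M F y where "strict_mono M" and "\<And>n. F n \<subseteq> {M n..<M (Suc n)}" and "\<And>n. Q n (F n) (y n)"
proof -
  obtain G z where G: "\<And>m n. finite (G m n) \<and> G m n \<subseteq> {m..} \<and> Q n (G m n) (z m n)"
    using blocks by metis
  define M where "M = rec_nat 0 (\<lambda>n m. Max (insert m (G m n)) + 1)"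
  have M_Suc: "M (Suc n) = Max (insert (M n) (G (M n) n)) + 1" for n
    unfolding M_def by simp
  show thesis
  proof (rule that)
    show "G (M n) n \<subseteq> {M n..<M (Suc n)}" for n
      using G[of "M n" n] Max_ge[of "insert (M n) (G (M n) n)"] unfolding M_Suc
      by (auto simp: less_Suc_eq_le)
    have "M n < M (Suc n)" for n
    proof -
      have "M n \<le> Max (insert (M n) (G (M n) n))"
        using G by (intro Max_ge) auto
      then show ?thesis
        unfolding M_Suc by simp
    qed
    then show "strict_mono M"
      by (simp add: strict_mono_Suc_iff)
    show "Q n (G (M n) n) (z (M n) n)" for n
      using G by blast
  qed
qed

lemma consecutive_blocks_disjoint:
  assumes "strict_mono M" and blocks: "\<And>n. F n \<subseteq> {M n..<M (Suc n)}"
    and "j \<in> F n" and "j \<in> F k"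
  shows "k = n"
proof (rule ccontr)
  assume "k \<noteq> n"
  then have "Suc k \<le> n \<or> Suc n \<le> k"
    by linarith
  then have "M (Suc k) \<le> M n \<or> M (Suc n) \<le> M k"
    using strict_mono_less_eq[OF \<open>strict_mono M\<close>] by blast
  then show False
    using blocks[of n] blocks[of k] assms(3,4) by fastforce
qed

definition glue :: "(nat \<Rightarrow> nat set) \<Rightarrow> (nat \<Rightarrow> seq) \<Rightarrow> seq" where
  "glue F y j = (if \<exists>n. j \<in> F n then y (THE n. j \<in> F n) j else 0)"

lemma glue_on_block:
  assumes "strict_mono M" and "\<And>n. F n \<subseteq> {M n..<M (Suc n)}" and "j \<in> F n"
  shows "glue F y j = y n j"
proof -
  have "(THE k. j \<in> F k) = n"
    by (rule the_equality[where P = "\<lambda>k. j \<in> F k", OF assms(3) consecutive_blocks_disjoint[OF assms]])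
  then show ?thesis
    using assms(3) unfolding glue_def by auto
qed

lemma glue_in_ellp:
  assumes "strict_mono M" and blocks: "\<And>n. F n \<subseteq> {M n..<M (Suc n)}"
    and mass: "\<And>n. (\<Sum>j\<in>F n. \<bar>y n j\<bar> powr p) \<le> (1 / 2) ^ n"
  shows "glue F y \<in> ellp p"
proof -
  have fin: "finite (F n)" for n
    by (rule finite_subset[OF blocks finite_atLeastLessThan])
  have M_ge: "n \<le> M n" for n
    using \<open>strict_mono M\<close> by (rule seq_suble)
  note disjoint = consecutive_blocks_disjoint[OF \<open>strict_mono M\<close> blocks]
  have "(\<Sum>j<N. \<bar>glue F y j\<bar> powr p) \<le> 2" for N
  proof -
    define U where "U = (\<Union>k<N. F k)"
    have "(\<Sum>j<N. \<bar>glue F y j\<bar> powr p) = (\<Sum>j\<in>{..<N} \<inter> U. \<bar>glue F y j\<bar> powr p)"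
    proof (rule sum.mono_neutral_right)
      show "\<forall>j\<in>{..<N} - {..<N} \<inter> U. \<bar>glue F y j\<bar> powr p = 0"
      proof
        fix j assume j: "j \<in> {..<N} - {..<N} \<inter> U"
        have "j \<notin> F k" for k
        proof
          assume "j \<in> F k"
          moreover from this have "k < N"
            using j blocks[of k] M_ge[of k] by auto
          ultimately show False
            using j unfolding U_def by blast
        qed
        then show "\<bar>glue F y j\<bar> powr p = 0"
          unfolding glue_def by simp
      qed
    qed auto
    also have "\<dots> \<le> (\<Sum>j\<in>U. \<bar>glue F y j\<bar> powr p)"
      unfolding U_def using fin by (intro sum_mono2) auto
    also have "\<dots> = (\<Sum>k<N. \<Sum>j\<in>F k. \<bar>glue F y j\<bar> powr p)"
      unfolding U_def using fin disjoint by (subst sum.UNION_disjoint) blast+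
    also have "\<dots> = (\<Sum>k<N. \<Sum>j\<in>F k. \<bar>y k j\<bar> powr p)"
      using glue_on_block[OF \<open>strict_mono M\<close> blocks] by simp
    also have "\<dots> \<le> (\<Sum>k<N. (1 / 2) ^ k)"
      using mass by (intro sum_mono) blast
    also have "\<dots> \<le> (\<Sum>k. (1 / 2 :: real) ^ k)"
      by (intro sum_le_suminf summable_geometric) auto
    also have "\<dots> = 2"
      by (simp add: suminf_geometric)
    finally show ?thesis .
  qed
  then show ?thesis
    unfolding ellp_def by (intro CollectI summableI_nonneg_bounded) auto
qed

lemma glue_blocks:
  fixes P :: "nat \<Rightarrow> nat set \<Rightarrow> seq \<Rightarrow> bool"
  assumes blocks: "\<And>m n. \<exists>F y. finite F \<and> F \<subseteq> {m..} \<and> (\<Sum>j\<in>F. \<bar>y j\<bar> powr p) \<le> (1 / 2) ^ n \<and> P n F y"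
  shows "\<exists>x\<in>ellp p. \<forall>n. \<exists>F y. finite F \<and> F \<subseteq> {n..} \<and> P n F y \<and> (\<forall>j\<in>F. x j = y j)"
proof -
  obtain M F y where M: "strict_mono M" and F: "\<And>n. F n \<subseteq> {M n..<M (Suc n)}"
    and Fy: "\<And>n. (\<Sum>j\<in>F n. \<bar>y n j\<bar> powr p) \<le> (1 / 2) ^ n \<and> P n (F n) (y n)"
    by (rule consecutive_blocks[where Q = "\<lambda>n F y. (\<Sum>j\<in>F. \<bar>y j\<bar> powr p) \<le> (1 / 2) ^ n \<and> P n F y",
          OF blocks]) blast
  have "glue F y \<in> ellp p"
    using glue_in_ellp[OF M F] Fy by blast
  moreover have "\<exists>F' y'. finite F' \<and> F' \<subseteq> {n..} \<and> P n F' y' \<and> (\<forall>j\<in>F'. glue F y j = y' j)" for n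
  proof (intro exI conjI)
    show "finite (F n)"
      by (rule finite_subset[OF F finite_atLeastLessThan])
    show "F n \<subseteq> {n..}"
      using F[of n] seq_suble[OF M, of n] by auto
    show "P n (F n) (y n)"
      using Fy by blast
    show "\<forall>j\<in>F n. glue F y j = y n j"
      using glue_on_block[OF M F] by blast
  qed
  ultimately show ?thesis
    by blast
qed

locale matrix_bfs = seq_bfs +
  fixes a :: "nat \<Rightarrow> nat \<Rightarrow> real" and p :: real
  assumes col_mem: "\<And>j. col a j \<in> L" and p_gt_1: "p > 1"
begin

definition lp_estimate :: "real \<Rightarrow> bool" where
  "lp_estimate K \<longleftrightarrow> (\<forall>F x. finite F \<longrightarrow> (\<forall>j\<in>F. 0 \<le> x j) \<longrightarrow>
     N (colsum a F x) \<le> K * (\<Sum>j\<in>F. x j powr p) powr (1 / p))"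

lemma p_pos: "p > 0"
  using p_gt_1 by simp

lemma scaled_col_mem: "(\<lambda>i. c * a i j) \<in> L"
  using scale_mem[OF col_mem[of j], of c] unfolding col_def .

lemma colsum_mem: "finite F \<Longrightarrow> colsum a F x \<in> L"
  unfolding colsum_def using sum_mem_norm_sum_le[of F "\<lambda>j i. x j * a i j"] scaled_col_mem by simp

lemma norm_colsum_le: "finite F \<Longrightarrow> N (colsum a F x) \<le> (\<Sum>j\<in>F. \<bar>x j\<bar> * N (col a j))"
  unfolding colsum_def
  using sum_mem_norm_sum_le[of F "\<lambda>j i. x j * a i j"] scaled_col_mem
    norm_scale[OF col_mem, unfolded col_def]
  by (simp add: col_def)

lemma dual_colsum:
  "\<phi> \<in> bfs_dual L N \<Longrightarrow> finite F \<Longrightarrow> \<phi> (colsum a F x) = (\<Sum>j\<in>F. x j * \<phi> (mM a {j}))"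
  unfolding colsum_def mM_singleton
  using dual_sum[of \<phi> F "\<lambda>j i. x j * a i j"] scaled_col_mem
    dual_scale[OF _ col_mem, unfolded col_def]
  by (simp add: col_def)

lemma lp_estimate_signed:
  assumes est: "lp_estimate K" and K: "K \<ge> 0" and F: "finite F"
  shows "N (colsum a F x) \<le> 2 * K * (\<Sum>j\<in>F. \<bar>x j\<bar> powr p) powr (1 / p)"
proof -
  define xpos where "xpos j = max (x j) 0" for j
  define xneg where "xneg j = max (- x j) 0" for j
  have part_le: "(\<Sum>j\<in>F. y j powr p) powr (1 / p) \<le> (\<Sum>j\<in>F. \<bar>x j\<bar> powr p) powr (1 / p)"
    if "\<And>j. 0 \<le> y j \<and> y j \<le> \<bar>x j\<bar>" for y
    using that p_pos by (intro powr_mono2 sum_mono sum_nonneg) (auto intro!: powr_mono2)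
  have "colsum a F x = (\<lambda>i. colsum a F xpos i - colsum a F xneg i)"
    unfolding colsum_diff[symmetric] xpos_def xneg_def by (rule colsum_cong) auto
  then have "N (colsum a F x) \<le> N (colsum a F xpos) + N (colsum a F xneg)"
    using norm_triangle_diff[OF colsum_mem[OF F] colsum_mem[OF F]] by simp
  also have "\<dots> \<le> K * (\<Sum>j\<in>F. xpos j powr p) powr (1 / p) + K * (\<Sum>j\<in>F. xneg j powr p) powr (1 / p)"
    using est F unfolding lp_estimate_def xpos_def xneg_def by (intro add_mono) auto
  also have "\<dots> \<le> 2 * K * (\<Sum>j\<in>F. \<bar>x j\<bar> powr p) powr (1 / p)"
  proof -
    have "K * (\<Sum>j\<in>F. xpos j powr p) powr (1 / p) \<le> K * (\<Sum>j\<in>F. \<bar>x j\<bar> powr p) powr (1 / p)"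
      by (intro mult_left_mono part_le K) (auto simp: xpos_def)
    moreover have "K * (\<Sum>j\<in>F. xneg j powr p) powr (1 / p) \<le> K * (\<Sum>j\<in>F. \<bar>x j\<bar> powr p) powr (1 / p)"
      by (intro mult_left_mono part_le K) (auto simp: xneg_def)
    ultimately show ?thesis by linarith
  qed
  finally show ?thesis .
qed

lemma colsum_Cauchy:
  assumes est: "lp_estimate K" and K: "K \<ge> 0" and x: "x \<in> ellp p" and e: "e > 0"
  shows "\<exists>n0. \<forall>m\<ge>n0. \<forall>n\<ge>n0. N (\<lambda>i. colsum a {..<m} x i - colsum a {..<n} x i) < e"
proof -
  define d where "d = e / (2 * K + 1)"
  have d: "d > 0" "2 * K * d < e"
    unfolding d_def using K e by (auto simp: field_simps)
  have "d powr p > 0"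
    using d by simp
  then obtain n0 where "\<forall>n\<ge>n0. \<forall>m. norm (\<Sum>j\<in>{n..<m}. \<bar>x j\<bar> powr p) < d powr p"
    using x unfolding ellp_def summable_Cauchy by blast
  then have n0: "\<And>n m. n \<ge> n0 \<Longrightarrow> \<bar>\<Sum>j\<in>{n..<m}. \<bar>x j\<bar> powr p\<bar> < d powr p"
    by simp
  have block: "N (colsum a {n..<m} x) < e" if "n \<ge> n0" for n m
  proof -
    have "(\<Sum>j\<in>{n..<m}. \<bar>x j\<bar> powr p) powr (1 / p) < (d powr p) powr (1 / p)"
      using n0[OF that, of m] p_pos by (intro powr_less_mono2) (auto intro!: sum_nonneg)
    then have "(\<Sum>j\<in>{n..<m}. \<bar>x j\<bar> powr p) powr (1 / p) < d"
      using d p_pos by (simp add: powr_powr)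
    then have "2 * K * (\<Sum>j\<in>{n..<m}. \<bar>x j\<bar> powr p) powr (1 / p) \<le> 2 * K * d"
      using K by (intro mult_left_mono) auto
    then show ?thesis
      using lp_estimate_signed[OF est K, of "{n..<m}" x] d by simp
  qed
  have "N (\<lambda>i. colsum a {..<m} x i - colsum a {..<n} x i) < e" if "m \<ge> n0" "n \<ge> n0" for m n
  proof (cases "n \<le> m")
    case True
    then show ?thesis using block[OF that(2)] colsum_split_lessThan[OF True] by simp
  next
    case False
    then show ?thesis
      using block[OF that(1), of n] colsum_split_lessThan[of m n a x]
        norm_minus_commute[OF colsum_mem[OF finite_lessThan] colsum_mem[OF finite_lessThan], of m x n x]
      by simp
  qed
  then show ?thesis by blast
qed

lemma colsum_tendsto_matop:
  assumes est: "lp_estimate K" and K: "K \<ge> 0" and x: "x \<in> ellp p"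
  shows "matop a x \<in> L" and "(\<lambda>n. N (\<lambda>i. colsum a {..<n} x i - matop a x i)) \<longlonglongrightarrow> 0"
    and "\<And>i. summable (\<lambda>j. a i j * x j)" and "N (matop a x) \<le> 2 * K * ellp_norm p x"
proof -
  obtain y where y: "y \<in> L" and lim: "(\<lambda>n. N (\<lambda>i. colsum a {..<n} x i - y i)) \<longlonglongrightarrow> 0"
    using complete[of "\<lambda>n. colsum a {..<n} x"] colsum_mem colsum_Cauchy[OF est K x] by blast
  have sums: "(\<lambda>j. a i j * x j) sums y i" for i
    using dual_tendsto[OF coordinate_in_dual colsum_mem[OF finite_lessThan] y lim]
    unfolding sums_def colsum_def by (simp add: mult.commute)
  then have y_eq: "matop a x = y"
    unfolding matop_def by (auto simp: sums_iff)
  then show "matop a x \<in> L" and "(\<lambda>n. N (\<lambda>i. colsum a {..<n} x i - matop a x i)) \<longlonglongrightarrow> 0"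
    using y lim by simp_all
  show "summable (\<lambda>j. a i j * x j)" for i
    using sums by (rule sums_summable)
  have "N (colsum a {..<n} x) \<le> 2 * K * ellp_norm p x" for n
    using lp_estimate_signed[OF est K, of "{..<n}" x] K
      mult_left_mono[OF finite_sum_le_ellp_norm[OF x p_pos, of "{..<n}"], of "2 * K"]
    by simp
  then show "N (matop a x) \<le> 2 * K * ellp_norm p x"
    unfolding y_eq by (rule norm_le_if_tendsto[OF colsum_mem[OF finite_lessThan] y lim])
qed

lemma lp_estimate_if_bounded_on_finite_support:
  assumes bound: "\<And>F y. finite F \<Longrightarrow> (\<And>j. j \<notin> F \<Longrightarrow> y j = 0) \<Longrightarrow> N (matop a y) \<le> K * ellp_norm p y"
  shows "\<exists>K>0. lp_estimate K"
proof -
  have "N (colsum a F x) \<le> max K 1 * (\<Sum>j\<in>F. x j powr p) powr (1 / p)"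
    if F: "finite F" and x: "\<forall>j\<in>F. 0 \<le> x j" for F x
  proof -
    define y where "y = seq_restrict F x"
    have y_zero: "\<And>j. j \<notin> F \<Longrightarrow> y j = 0"
      unfolding y_def seq_restrict_def by simp
    have "colsum a F x = colsum a F y"
      unfolding y_def seq_restrict_def by (rule colsum_cong) simp
    also have "\<dots> = matop a y"
      by (rule matop_finite_support[OF F y_zero, symmetric])
    finally have "N (colsum a F x) \<le> K * ellp_norm p y"
      using bound[OF F y_zero] by simp
    also have "\<dots> \<le> max K 1 * ellp_norm p y"
      by (intro mult_right_mono) (auto simp: ellp_norm_def)
    also have "ellp_norm p y = (\<Sum>j\<in>F. \<bar>y j\<bar> powr p) powr (1 / p)"
      by (rule ellp_finite_support(2)[OF F y_zero p_pos])
    also have "\<dots> = (\<Sum>j\<in>F. x j powr p) powr (1 / p)"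
      using x by (intro arg_cong2[where f = "(powr)"] sum.cong) (auto simp: y_def seq_restrict_def)
    finally show ?thesis .
  qed
  then show ?thesis
    unfolding lp_estimate_def by (intro exI[of _ "max K 1"]) auto
qed

definition bounded_on_ellp :: bool where
  "bounded_on_ellp \<longleftrightarrow> (\<forall>x\<in>ellp p. \<forall>i. summable (\<lambda>j. a i j * x j)) \<and>
     (\<forall>x\<in>ellp p. matop a x \<in> L) \<and> (\<exists>K. \<forall>x\<in>ellp p. N (matop a x) \<le> K * ellp_norm p x)"

definition has_bounded_ellp_extension :: bool where
  "has_bounded_ellp_extension \<longleftrightarrow> (\<exists>T. (\<forall>x\<in>ellp p. T x \<in> L) \<and>
     (\<forall>x\<in>ellp p. \<forall>y\<in>ellp p. T (\<lambda>i. x i + y i) = (\<lambda>i. T x i + T y i)) \<and>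
     (\<forall>c. \<forall>x\<in>ellp p. T (\<lambda>i. c * x i) = (\<lambda>i. c * T x i)) \<and>
     (\<exists>K. \<forall>x\<in>ellp p. N (T x) \<le> K * ellp_norm p x) \<and>
     (\<forall>x\<in>ell1. T x = matop a x))"

lemma bounded_on_ellp_iff_lp_estimate: "bounded_on_ellp \<longleftrightarrow> (\<exists>K>0. lp_estimate K)"
proof
  assume "bounded_on_ellp"
  then obtain K where "\<forall>x\<in>ellp p. N (matop a x) \<le> K * ellp_norm p x"
    unfolding bounded_on_ellp_def by blast
  then show "\<exists>K>0. lp_estimate K"
    using ellp_finite_support(1)[OF _ _ p_pos] by (intro lp_estimate_if_bounded_on_finite_support) blast
next
  assume "\<exists>K>0. lp_estimate K"
  then obtain K where "K \<ge> 0" "lp_estimate K"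
    by (auto intro: less_imp_le)
  then show "bounded_on_ellp"
    unfolding bounded_on_ellp_def using colsum_tendsto_matop by blast
qed

lemma has_bounded_ellp_extension_iff: "has_bounded_ellp_extension \<longleftrightarrow> bounded_on_ellp"
proof
  assume "has_bounded_ellp_extension"
  then obtain T K where bound: "\<forall>x\<in>ellp p. N (T x) \<le> K * ellp_norm p x"
    and extends: "\<forall>x\<in>ell1. T x = matop a x"
    unfolding has_bounded_ellp_extension_def by blast
  have "N (matop a y) \<le> K * ellp_norm p y" if "finite F" "\<And>j. j \<notin> F \<Longrightarrow> y j = 0" for F y
  proof -
    have "y \<in> ell1"
      unfolding ell1_def using summable_finite[OF that(1), of "\<lambda>j. \<bar>y j\<bar>"] that(2) by simp
    moreover have "y \<in> ellp p"
      by (rule ellp_finite_support(1)[OF that(1)]) (use that(2) p_pos in auto)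
    ultimately show ?thesis
      using bound extends by auto
  qed
  then show "bounded_on_ellp"
    using bounded_on_ellp_iff_lp_estimate lp_estimate_if_bounded_on_finite_support by blast
next
  assume A: "bounded_on_ellp"
  then have summable: "\<And>x i. x \<in> ellp p \<Longrightarrow> summable (\<lambda>j. a i j * x j)"
    unfolding bounded_on_ellp_def by blast
  have "matop a (\<lambda>i. x i + y i) = (\<lambda>i. matop a x i + matop a y i)" if "x \<in> ellp p" "y \<in> ellp p" for x y
    unfolding matop_def using suminf_add[OF summable[OF that(1)] summable[OF that(2)]]
    by (simp add: distrib_left)
  moreover have "matop a (\<lambda>i. c * x i) = (\<lambda>i. c * matop a x i)" if "x \<in> ellp p" for c x
    unfolding matop_def using suminf_mult[OF summable[OF that], of c]
    by (simp add: algebra_simps)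
  ultimately show "has_bounded_ellp_extension"
    using A unfolding bounded_on_ellp_def has_bounded_ellp_extension_def by (intro exI[of _ "matop a"]) blast
qed

lemma dual_summable_if_lp_estimate:
  assumes est: "lp_estimate K" and K: "K \<ge> 0" and x: "x \<in> ellp p" and \<phi>: "\<phi> \<in> bfs_dual L N"
  shows "summable (\<lambda>j. \<bar>x j\<bar> * \<bar>\<phi> (mM a {j})\<bar>)"
proof -
  obtain K\<phi> where K\<phi>: "K\<phi> \<ge> 0" "\<And>z. z \<in> L \<Longrightarrow> \<bar>\<phi> z\<bar> \<le> K\<phi> * N z"
    using dual_bounded[OF \<phi>] by blast
  define y where "y j = \<bar>x j\<bar> * sgn (\<phi> (mM a {j}))" for j
  have "\<bar>y j\<bar> \<le> \<bar>x j\<bar>" for j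
    by (simp add: y_def abs_mult abs_sgn_eq)
  then have y: "y \<in> ellp p" and y_norm: "ellp_norm p y \<le> ellp_norm p x"
    using ellp_solid[OF x p_pos] by blast+
  have "(\<Sum>j<n. \<bar>x j\<bar> * \<bar>\<phi> (mM a {j})\<bar>) \<le> K\<phi> * (2 * K * ellp_norm p x)" for n
  proof -
    have "(\<Sum>j<n. \<bar>x j\<bar> * \<bar>\<phi> (mM a {j})\<bar>) = \<phi> (colsum a {..<n} y)"
      unfolding dual_colsum[OF \<phi> finite_lessThan] y_def by (simp add: abs_sgn mult_ac)
    also have "\<dots> \<le> K\<phi> * N (colsum a {..<n} y)"
      using K\<phi>(2)[OF colsum_mem[OF finite_lessThan]] abs_ge_self order_trans by blast
    also have "\<dots> \<le> K\<phi> * (2 * K * (\<Sum>j<n. \<bar>y j\<bar> powr p) powr (1 / p))"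
      by (intro mult_left_mono lp_estimate_signed[OF est K] K\<phi>(1)) simp
    also have "\<dots> \<le> K\<phi> * (2 * K * ellp_norm p x)"
      using order_trans[OF finite_sum_le_ellp_norm[OF y p_pos finite_lessThan] y_norm] K K\<phi>(1)
      by (intro mult_left_mono) auto
    finally show ?thesis .
  qed
  then show ?thesis
    by (intro summableI_nonneg_bounded) auto
qed

lemma ellp_subset_ell1_mM_if_lp_estimate:
  assumes est: "lp_estimate K" and K: "K \<ge> 0"
  shows "ellp p \<subseteq> ell1_mM L N a"
proof
  fix x assume x: "x \<in> ellp p"
  have "\<exists>v\<in>L. \<forall>\<phi>\<in>bfs_dual L N. \<phi> v = (\<Sum>j. if j \<in> S then x j * \<phi> (mM a {j}) else 0)" for S
  proof -
    define xS where "xS = seq_restrict S x"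
    have xS: "xS \<in> ellp p"
      using ellp_solid(1)[OF x p_pos, of xS] unfolding xS_def seq_restrict_def by auto
    have "(\<lambda>j. if j \<in> S then x j * \<phi> (mM a {j}) else 0) sums \<phi> (matop a xS)"
      if \<phi>: "\<phi> \<in> bfs_dual L N" for \<phi>
    proof -
      have "\<phi> (colsum a {..<n} xS) = (\<Sum>j<n. if j \<in> S then x j * \<phi> (mM a {j}) else 0)" for n
        unfolding dual_colsum[OF \<phi> finite_lessThan] xS_def seq_restrict_def by (intro sum.cong) auto
      then show ?thesis
        using dual_tendsto[OF \<phi> colsum_mem[OF finite_lessThan] colsum_tendsto_matop(1,2)[OF est K xS]]
        unfolding sums_def by simp
    qed
    then show ?thesis
      using colsum_tendsto_matop(1)[OF est K xS] sums_unique by blast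
  qed
  with dual_summable_if_lp_estimate[OF est K x] show "x \<in> ell1_mM L N a"
    unfolding ell1_mM_def by blast
qed

lemma ell1_mM_if_abs:
  assumes abs_x: "(\<lambda>j. \<bar>x j\<bar>) \<in> ell1_mM L N a"
  shows "x \<in> ell1_mM L N a"
proof -
  have summable: "\<forall>\<phi>\<in>bfs_dual L N. summable (\<lambda>j. \<bar>x j\<bar> * \<bar>\<phi> (mM a {j})\<bar>)"
    using abs_x unfolding ell1_mM_def by auto
  have integral: "\<exists>v\<in>L. \<forall>\<phi>\<in>bfs_dual L N. \<phi> v = (\<Sum>j. if j \<in> S then \<bar>x j\<bar> * \<phi> (mM a {j}) else 0)"
    for S using abs_x unfolding ell1_mM_def by auto
  have "\<exists>v\<in>L. \<forall>\<phi>\<in>bfs_dual L N. \<phi> v = (\<Sum>j. if j \<in> S then x j * \<phi> (mM a {j}) else 0)" for S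
  proof -
    define S\<^sub>1 where "S\<^sub>1 = S \<inter> {j. x j \<ge> 0}"
    define S\<^sub>2 where "S\<^sub>2 = S \<inter> {j. x j < 0}"
    obtain v\<^sub>1 where v\<^sub>1: "v\<^sub>1 \<in> L"
      "\<forall>\<phi>\<in>bfs_dual L N. \<phi> v\<^sub>1 = (\<Sum>j. if j \<in> S\<^sub>1 then \<bar>x j\<bar> * \<phi> (mM a {j}) else 0)"
      using integral by blast
    obtain v\<^sub>2 where v\<^sub>2: "v\<^sub>2 \<in> L"
      "\<forall>\<phi>\<in>bfs_dual L N. \<phi> v\<^sub>2 = (\<Sum>j. if j \<in> S\<^sub>2 then \<bar>x j\<bar> * \<phi> (mM a {j}) else 0)"
      using integral by blast
    have "\<phi> (\<lambda>i. v\<^sub>1 i - v\<^sub>2 i) = (\<Sum>j. if j \<in> S then x j * \<phi> (mM a {j}) else 0)"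
      if \<phi>: "\<phi> \<in> bfs_dual L N" for \<phi>
    proof -
      have "summable (\<lambda>j. if j \<in> T then \<bar>x j\<bar> * \<phi> (mM a {j}) else 0)" for T
        by (rule summable_comparison_test[OF _ bspec[OF summable \<phi>]]) (auto simp: abs_mult)
      then have "\<phi> (\<lambda>i. v\<^sub>1 i - v\<^sub>2 i) = (\<Sum>j. (if j \<in> S\<^sub>1 then \<bar>x j\<bar> * \<phi> (mM a {j}) else 0)
          - (if j \<in> S\<^sub>2 then \<bar>x j\<bar> * \<phi> (mM a {j}) else 0))"
        using dual_diff[OF \<phi> v\<^sub>1(1) v\<^sub>2(1)] v\<^sub>1(2) v\<^sub>2(2) \<phi> by (simp add: suminf_diff[symmetric])
      also have "\<dots> = (\<Sum>j. if j \<in> S then x j * \<phi> (mM a {j}) else 0)"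
        by (rule arg_cong[where f = suminf]) (auto simp: S\<^sub>1_def S\<^sub>2_def)
      finally show ?thesis .
    qed
    then show ?thesis
      using diff_mem[OF v\<^sub>1(1) v\<^sub>2(1)] by blast
  qed
  with summable show ?thesis
    unfolding ell1_mM_def by auto
qed

lemma ell1_subset_ellr_mM_iff: "ell1 \<subseteq> ellr_mM (1 / p) L N a \<inter> ell1_mM L N a \<longleftrightarrow> ellp p \<subseteq> ell1_mM L N a"
proof
  assume D: "ell1 \<subseteq> ellr_mM (1 / p) L N a \<inter> ell1_mM L N a"
  show "ellp p \<subseteq> ell1_mM L N a"
  proof
    fix y assume "y \<in> ellp p"
    then have "(\<lambda>j. \<bar>y j\<bar> powr p) \<in> ell1"
      unfolding ellp_def ell1_def by simp
    then have "(\<lambda>j. \<bar>\<bar>y j\<bar> powr p\<bar> powr (1 / p)) \<in> ell1_mM L N a"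
      using D unfolding ellr_mM_def by auto
    then have "(\<lambda>j. \<bar>y j\<bar>) \<in> ell1_mM L N a"
      using p_pos by (simp add: powr_powr)
    then show "y \<in> ell1_mM L N a"
      by (rule ell1_mM_if_abs)
  qed
next
  assume C: "ellp p \<subseteq> ell1_mM L N a"
  show "ell1 \<subseteq> ellr_mM (1 / p) L N a \<inter> ell1_mM L N a"
  proof
    fix x assume x: "x \<in> ell1"
    then have "(\<lambda>j. \<bar>x j\<bar> powr (1 / p)) \<in> ellp p"
      using p_pos unfolding ellp_def ell1_def by (simp add: powr_powr)
    moreover have "x \<in> ellp p"
      using ell1_subset_ellp[of p] p_gt_1 x by auto
    ultimately show "x \<in> ellr_mM (1 / p) L N a \<inter> ell1_mM L N a"
      using C unfolding ellr_mM_def by auto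
  qed
qed

lemma ell1_mM_row_summable: "x \<in> ell1_mM L N a \<Longrightarrow> summable (\<lambda>j. \<bar>a i j * x j\<bar>)"
  using coordinate_in_dual[of i] unfolding ell1_mM_def mM_singleton col_def
  by (auto simp: abs_mult mult.commute)

text \<open>For x in l1(m_M), matop a (seq_restrict S x) is the integral of x over S with respect
  to m_M, as the coordinate functionals belong to the dual.\<close>
lemma ell1_mM_restrict_mem:
  assumes x: "x \<in> ell1_mM L N a"
  shows "matop a (seq_restrict S x) \<in> L"
proof -
  obtain v where v: "v \<in> L" "\<forall>\<phi>\<in>bfs_dual L N. \<phi> v = (\<Sum>j. if j \<in> S then x j * \<phi> (mM a {j}) else 0)"
    using x unfolding ell1_mM_def by blast
  have "v i = matop a (seq_restrict S x) i" for i
  proof -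
    have "v i = (\<Sum>j. if j \<in> S then x j * a i j else 0)"
      using bspec[OF v(2) coordinate_in_dual[of i]] unfolding mM_singleton col_def by simp
    also have "\<dots> = matop a (seq_restrict S x) i"
      unfolding matop_def seq_restrict_def by (intro arg_cong[where f = suminf] ext) simp
    finally show ?thesis .
  qed
  with v(1) show ?thesis
    by (metis ext)
qed

lemma restrict_norm_lower_semicontinuous:
  assumes fat: "fatou L N" and x: "x \<in> ell1_mM L N a" and gt: "N (matop a (seq_restrict S x)) > k"
  shows "\<exists>m. \<forall>T. agree_below m S T \<longrightarrow> N (matop a (seq_restrict T x)) > k"
proof (rule ccontr)
  assume "\<not> ?thesis"
  then obtain S' where S': "\<And>l. agree_below l S (S' l)" "\<And>l. N (matop a (seq_restrict (S' l) x)) \<le> k"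
    by (metis not_less)
  have "N (matop a (seq_restrict S x)) \<le> k"
    using fatou_lower_semicontinuous[OF fat ell1_mM_restrict_mem[OF x] S'(2)
        matop_restrict_tendsto[OF ell1_mM_row_summable[OF x] S'(1)]]
    by blast
  with gt show False
    by simp
qed

lemma restrict_norm_bounded_on_tails:
  assumes fat: "fatou L N" and x: "x \<in> ell1_mM L N a"
  shows "\<exists>m k. \<forall>S\<subseteq>{m..}. N (matop a (seq_restrict S x)) \<le> k"
proof -
  obtain m T k where bound: "\<And>S. agree_below m T S \<Longrightarrow> N (matop a (seq_restrict S x)) \<le> k"
    using bounded_on_cylinder_if_lower_semicontinuous[of "\<lambda>S. N (matop a (seq_restrict S x))"]
      restrict_norm_lower_semicontinuous[OF fat x] by blast
  have "N (matop a (seq_restrict S x)) \<le> 2 * k" if S: "S \<subseteq> {m..}" for S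
  proof -
    define T' where "T' = T \<inter> {..<m}"
    have "S \<inter> T' = {}"
      using S unfolding T'_def by auto
    then have "matop a (seq_restrict S x)
        = (\<lambda>i. matop a (seq_restrict (S \<union> T') x) i - matop a (seq_restrict T' x) i)"
      using matop_restrict_union[OF ell1_mM_row_summable[OF x]] by simp
    then have "N (matop a (seq_restrict S x))
        \<le> N (matop a (seq_restrict (S \<union> T') x)) + N (matop a (seq_restrict T' x))"
      using norm_triangle_diff[OF ell1_mM_restrict_mem[OF x] ell1_mM_restrict_mem[OF x]] by simp
    moreover have "agree_below m T (S \<union> T')" and "agree_below m T T'"
      using S unfolding agree_below_def T'_def by auto
    ultimately show ?thesis
      using bound[of "S \<union> T'"] bound[of T'] by linarith
  qed
  then show ?thesis
    by blast
qed

lemma lp_estimate_fails_normalized: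
  assumes "\<not> lp_estimate K"
  shows "\<exists>F y. finite F \<and> (\<forall>j\<in>F. 0 \<le> y j) \<and> (\<Sum>j\<in>F. y j powr p) = 1 \<and> N (colsum a F y) > K"
proof -
  obtain F x where F: "finite F" and x: "\<forall>j\<in>F. 0 \<le> x j"
    and big: "N (colsum a F x) > K * (\<Sum>j\<in>F. x j powr p) powr (1 / p)"
    using assms unfolding lp_estimate_def by auto
  define \<Sigma> where "\<Sigma> = (\<Sum>j\<in>F. x j powr p)"
  have "\<Sigma> \<noteq> 0"
  proof
    assume "\<Sigma> = 0"
    then have "\<forall>j\<in>F. x j = 0"
      using F unfolding \<Sigma>_def by (subst (asm) sum_nonneg_eq_0_iff) auto
    then have "colsum a F x = (\<lambda>i. 0)"
      unfolding colsum_def by simp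
    with big \<open>\<Sigma> = 0\<close> show False
      unfolding \<Sigma>_def by (simp add: norm_zero)
  qed
  then have \<Sigma>: "\<Sigma> > 0"
    unfolding \<Sigma>_def by (simp add: order_le_neq_trans sum_nonneg)
  define s where "s = \<Sigma> powr (1 / p)"
  have s: "s > 0" and s_p: "s powr p = \<Sigma>"
    unfolding s_def using \<Sigma> p_pos by (simp_all add: powr_powr)
  define y where "y j = (1 / s) * x j" for j
  have "(\<Sum>j\<in>F. y j powr p) = \<Sigma> / s powr p"
    unfolding y_def \<Sigma>_def using x s by (simp add: powr_divide sum_divide_distrib)
  moreover have "N (colsum a F y) = N (colsum a F x) / s"
    using norm_scale[OF colsum_mem[OF F], of "1 / s" x] s unfolding y_def colsum_scale by simp
  moreover have "N (colsum a F x) / s > K"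
    using big s unfolding s_def \<Sigma>_def by (simp add: field_simps)
  moreover have "\<forall>j\<in>F. 0 \<le> y j"
    using x s unfolding y_def by simp
  ultimately show ?thesis
    using F s_p \<Sigma> by (intro exI[of _ F] exI[of _ y]) auto
qed

lemma norm_colsum_le_card:
  assumes F: "finite F" and x: "\<And>j. j \<in> F \<Longrightarrow> \<bar>x j\<bar> \<le> 1" and col_bound: "\<And>j. N (col a j) \<le> K0"
  shows "N (colsum a F x) \<le> real (card F) * K0"
proof -
  have "N (colsum a F x) \<le> (\<Sum>j\<in>F. \<bar>x j\<bar> * N (col a j))"
    by (rule norm_colsum_le[OF F])
  also have "\<dots> \<le> real (card F) * K0"
  proof (rule sum_bounded_above)
    fix j assume "j \<in> F"
    then have "\<bar>x j\<bar> * N (col a j) \<le> N (col a j)"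
      using x by (intro mult_left_le_one_le norm_nonneg[OF col_mem]) auto
    then show "\<bar>x j\<bar> * N (col a j) \<le> K0"
      using col_bound[of j] by simp
  qed
  finally show ?thesis .
qed

text \<open>The columns below m have bounded norm, so they cannot carry a large hump.\<close>
lemma gliding_hump_block:
  assumes no_estimate: "\<And>K. K > 0 \<Longrightarrow> \<not> lp_estimate K" and col_bound: "\<And>j. N (col a j) \<le> K0"
  shows "\<exists>F y. finite F \<and> F \<subseteq> {m..} \<and> (\<Sum>j\<in>F. \<bar>y j\<bar> powr p) \<le> (1 / 2) ^ n \<and> N (colsum a F y) > n"
proof -
  have K0: "K0 \<ge> 0"
    using col_bound[of 0] norm_nonneg[OF col_mem[of 0]] by linarith
  define K where "K = (real n + 1) * 2 ^ n + real m * K0"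
  have "K > 0"
    unfolding K_def using K0 by (simp add: add_pos_nonneg)
  then obtain F y where F: "finite F" and y: "\<forall>j\<in>F. 0 \<le> y j"
    and mass: "(\<Sum>j\<in>F. y j powr p) = 1" and big: "N (colsum a F y) > K"
    using lp_estimate_fails_normalized[OF no_estimate] by blast
  have y_le_1: "y j \<le> 1" if "j \<in> F" for j
  proof (rule ccontr)
    assume "\<not> y j \<le> 1"
    then have "1 < y j powr p"
      using gr_one_powr[OF _ p_pos] by simp
    also have "\<dots> \<le> (\<Sum>j\<in>F. y j powr p)"
      using F that by (intro member_le_sum) auto
    finally show False
      using mass by simp
  qed
  define F\<^sub>1 where "F\<^sub>1 = F \<inter> {m..}"
  define F\<^sub>2 where "F\<^sub>2 = F - {m..}"
  have fin: "finite F\<^sub>1" "finite F\<^sub>2"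
    using F unfolding F\<^sub>1_def F\<^sub>2_def by auto
  have "N (colsum a F\<^sub>2 y) \<le> real (card F\<^sub>2) * K0"
    using y y_le_1 col_bound by (intro norm_colsum_le_card fin(2)) (auto simp: F\<^sub>2_def)
  also have "\<dots> \<le> real m * K0"
  proof -
    have "card F\<^sub>2 \<le> card {..<m}"
      unfolding F\<^sub>2_def by (intro card_mono) auto
    then show ?thesis
      using K0 by (intro mult_right_mono) auto
  qed
  finally have low: "N (colsum a F\<^sub>2 y) \<le> real m * K0" .
  have "colsum a F y = (\<lambda>i. colsum a F\<^sub>1 y i + colsum a F\<^sub>2 y i)"
    using colsum_union[OF fin, of a y] unfolding F\<^sub>1_def F\<^sub>2_def by (simp add: Int_Diff_Un Int_Diff_disjoint)
  then have "N (colsum a F y) \<le> N (colsum a F\<^sub>1 y) + N (colsum a F\<^sub>2 y)"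
    using norm_triangle[OF colsum_mem colsum_mem, OF fin] by simp
  with big low have high: "N (colsum a F\<^sub>1 y) > (real n + 1) * 2 ^ n"
    unfolding K_def by linarith
  define z where "z j = (1 / 2) ^ n * y j" for j
  have "(\<Sum>j\<in>F\<^sub>1. \<bar>z j\<bar> powr p) = ((1 / 2) ^ n) powr p * (\<Sum>j\<in>F\<^sub>1. y j powr p)"
    unfolding sum_distrib_left using y
    by (intro sum.cong refl) (auto simp: z_def F\<^sub>1_def abs_mult powr_mult)
  also have "\<dots> \<le> ((1 / 2) ^ n) powr p * (\<Sum>j\<in>F. y j powr p)"
    using F y unfolding F\<^sub>1_def by (intro mult_left_mono sum_mono2) auto
  also have "\<dots> \<le> (1 / 2) ^ n"
    using mass powr_le_one_le[of "(1 / 2) ^ n" p] p_gt_1 by (simp add: power_le_one)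
  finally have "(\<Sum>j\<in>F\<^sub>1. \<bar>z j\<bar> powr p) \<le> (1 / 2) ^ n" .
  moreover have "N (colsum a F\<^sub>1 z) > n"
  proof -
    have "N (colsum a F\<^sub>1 z) = (1 / 2) ^ n * N (colsum a F\<^sub>1 y)"
      using norm_scale[OF colsum_mem[OF fin(1)], of "(1 / 2) ^ n" y] unfolding z_def colsum_scale by simp
    also have "\<dots> > (1 / 2) ^ n * ((real n + 1) * 2 ^ n)"
      using high by simp
    also have "(1 / 2) ^ n * ((real n + 1) * 2 ^ n) = real n + 1"
      by (simp add: power_one_over)
    finally show ?thesis
      by simp
  qed
  moreover have "F\<^sub>1 \<subseteq> {m..}"
    unfolding F\<^sub>1_def by auto
  ultimately show ?thesis
    using fin(1) by blast
qed

lemma lp_estimate_if_ellp_subset_ell1_mM: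
  assumes fat: "fatou L N" and C: "ellp p \<subseteq> ell1_mM L N a" and col_bound: "\<And>j. N (col a j) \<le> K0"
  shows "\<exists>K>0. lp_estimate K"
proof (rule ccontr)
  assume "\<not> (\<exists>K>0. lp_estimate K)"
  then have "\<And>K. K > 0 \<Longrightarrow> \<not> lp_estimate K"
    by blast
  from glue_blocks[where P = "\<lambda>n F y. N (colsum a F y) > n", OF gliding_hump_block[OF this col_bound]]
  obtain x where x: "x \<in> ellp p"
    and humps: "\<And>n. \<exists>F y. finite F \<and> F \<subseteq> {n..} \<and> N (colsum a F y) > n \<and> (\<forall>j\<in>F. x j = y j)"
    by blast
  obtain m k where tails: "\<And>S. S \<subseteq> {m..} \<Longrightarrow> N (matop a (seq_restrict S x)) \<le> k"
    using restrict_norm_bounded_on_tails[OF fat] C x by blast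
  define n where "n = max m (nat \<lceil>k\<rceil>)"
  obtain F y where F: "finite F" "F \<subseteq> {n..}" and big: "N (colsum a F y) > n"
    and xy: "\<forall>j\<in>F. x j = y j"
    using humps[of n] by blast
  have "matop a (seq_restrict F x) = colsum a F y"
    using matop_restrict_finite[OF F(1)] colsum_cong[of F x y] xy by simp
  moreover have "F \<subseteq> {m..}"
    using F(2) unfolding n_def by auto
  ultimately have "N (colsum a F y) \<le> k"
    using tails[of F] by simp
  moreover have "k \<le> real n"
    unfolding n_def by linarith
  ultimately show False
    using big by simp
qed

end

theorem proposition7p9:
  fixes L :: "seq set" and N :: "seq \<Rightarrow> real"
    and a :: "nat \<Rightarrow> nat \<Rightarrow> real" and p :: real
  assumes bfs: "bfs L N" and fat: "fatou L N"
    and l1_sub: "ell1 \<subseteq> L"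
    and cols_nz: "\<forall>j. col a j \<noteq> (\<lambda>i. 0)"
    and cols_in: "\<forall>j. col a j \<in> L"
    and cols_bdd: "\<exists>K. \<forall>j. N (col a j) \<le> K"
    and p: "p > 1"
  defines "A \<equiv> (\<forall>x\<in>ellp p. \<forall>i. summable (\<lambda>j. a i j * x j)) \<and>
                (\<forall>x\<in>ellp p. matop a x \<in> L) \<and>
                (\<exists>K. \<forall>x\<in>ellp p. N (matop a x) \<le> K * ellp_norm p x)"
    and "B \<equiv> (\<exists>T. (\<forall>x\<in>ellp p. T x \<in> L) \<and>
                   (\<forall>x\<in>ellp p. \<forall>y\<in>ellp p. T (\<lambda>i. x i + y i) = (\<lambda>i. T x i + T y i)) \<and>
                   (\<forall>c. \<forall>x\<in>ellp p. T (\<lambda>i. c * x i) = (\<lambda>i. c * T x i)) \<and>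
                   (\<exists>K. \<forall>x\<in>ellp p. N (T x) \<le> K * ellp_norm p x) \<and>
                   (\<forall>x\<in>ell1. T x = matop a x))"
    and "C \<equiv> ellp p \<subseteq> ell1_mM L N a"
    and "D \<equiv> ell1 \<subseteq> ellr_mM (1 / p) L N a \<inter> ell1_mM L N a"
    and "E \<equiv> (\<exists>K>0. \<forall>F x. finite F \<longrightarrow> (\<forall>j\<in>F. 0 \<le> x j) \<longrightarrow>
                N (\<lambda>i. \<Sum>j\<in>F. x j * a i j) \<le> K * (\<Sum>j\<in>F. x j powr p) powr (1 / p))"
  shows "(A \<longleftrightarrow> B) \<and> (A \<longleftrightarrow> C) \<and> (A \<longleftrightarrow> D) \<and> (A \<longleftrightarrow> E)"
proof -
  interpret matrix_bfs L N a p
    using bfs l1_sub cols_in p by unfold_locales auto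
  obtain K0 where K0: "\<And>j. N (col a j) \<le> K0"
    using cols_bdd by blast
  have "A \<longleftrightarrow> bounded_on_ellp"
    unfolding A_def bounded_on_ellp_def ..
  moreover have "B \<longleftrightarrow> has_bounded_ellp_extension"
    unfolding B_def has_bounded_ellp_extension_def ..
  moreover have "E \<longleftrightarrow> (\<exists>K>0. lp_estimate K)"
    unfolding E_def lp_estimate_def colsum_def ..
  moreover have "C \<longleftrightarrow> (\<exists>K>0. lp_estimate K)"
    unfolding C_def using lp_estimate_if_ellp_subset_ell1_mM[OF fat _ K0]
      ellp_subset_ell1_mM_if_lp_estimate by (meson less_imp_le)
  moreover have "D \<longleftrightarrow> C"
    unfolding C_def D_def by (rule ell1_subset_ellr_mM_iff)
  ultimately show ?thesis
    using bounded_on_ellp_iff_lp_estimate has_bounded_ellp_extension_iff by blast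
qed

end
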